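(* Let $\Theta$ be a branch of a tableau of $\mathbf{TAB}_{\mathbf{IB}}$. If a nominal $i$ occurs in the root formula of $\Theta$, then $i\in\mathrm{dom}(v_\Theta)$, i.e. the identity urfather $v_\Theta(i)$ exists.
   Context: Hybrid language: fix disjoint countably infinite sets $\mathbf{Prop}$ (propositional variables) and $\mathbf{Nom}$ (nominals). Formulas: $\varphi ::= p \mid i \mid \neg\varphi \mid \varphi\land\varphi \mid \Diamond\varphi \mid @_i\varphi$ with $p\in\mathbf{Prop}$, $i\in\mathbf{Nom}$; $\Box\varphi$ abbreviates $\neg\Diamond\neg\varphi$. Tableau calculus $\mathbf{TAB}_{\mathbf{IB}}$. A tableau is a well-founded tree whose nodes are formulas of the form $@_i\varphi$; its root is a formula $@_i\varphi$ (the root formula) where $i$ does not occur in $\varphi$. A branch is a maximal path; $\varphi\in\Theta$ means $\varphi$ occurs on branch $\Theta$. Each branch is extended by applying the rules below to its formulas as often as possible, except that no further formula is added to a branch once either (i) every new formula generated by applying any rule already occurs on the branch, or (ii) the branch is closed, i.e. contains $@_i\varphi$ and $@_i\neg\varphi$ for some formula $\varphi$ and nominal $i$. An accessibility formula is a formula $@_i\Diamond j$ added by rule $[\Diamond]$ (with $j$ the new nominal). Rules (premises already on the branch; conclusions added to it): [$\neg\neg$] from $@_i\neg\neg\varphi$ add $@_i\varphi$; [$\land$] from $@_i(\varphi\land\psi)$ add $@_i\varphi$ and $@_i\psi$; [$\neg\land$] from $@_i\neg(\varphi\land\psi)$ split the branch into one extended by $@_i\neg\varphi$ and one extended by $@_i\neg\psi$;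 [$\Diamond$] from $@_i\Diamond\varphi$, which is not an accessibility formula, add $@_i\Diamond j$ and $@_j\varphi$ where $j$ is a nominal not occurring on the branch; this rule is applied at most once per formula, and only if $i$ is a quasi-urfather on the branch (defined below); [$\neg\Diamond$] from $@_i\neg\Diamond\varphi$ and $@_i\Diamond j$ add $@_j\neg\varphi$; [$\Box_{sym}$] from $@_i\Box\varphi$ and $@_j\Diamond i$ add $@_j\varphi$; [$@$] from $@_i@_j\varphi$ add $@_j\varphi$; [$\neg@$] from $@_i\neg@_j\varphi$ add $@_j\neg\varphi$; [$Id$] from $@_i\varphi$, which is not an accessibility formula, and $@_i j$ add $@_j\varphi$; [$Ref$] for any nominal $i$ occurring on the branch add $@_i i$; ($\mathcal{I}$) for any nominal $i$ occurring on the branch add $@_i\neg\Diamond i$. Auxiliary notions for a branch $\Theta$. $@_i\varphi$ is a quasi-subformula of $@_j\psi$ if $\varphi$ is a subformula of $\psi$, or $\varphi=\neg\chi$ with $\chi$ a subformula of $\psi$. For a nominal $i$ occurring in $\Theta$, $T^\Theta(i)=\{\varphi \mid @_i\varphi\in\Theta$ and $@_i\varphi$ is a quasi-subformula of the root formula$\}$. Nominals $i,j$ are twins if $T^\Theta(i)=T^\Theta(j)$. $i\prec_\Theta j$ if $j$ was introduced by applying $[\Diamond]$ to a formula $@_i\Diamond\varphi$; $\prec_\Theta^*$ is its reflexive transitive closure. A nominal $i$ is a quasi-urfather on $\Theta$ if there are no twins $j\neq k$ with $j\prec_\Theta^* i$ and $k\prec_\Theta^* i$. The identity urfather $v_\Theta(i)$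 of a nominal $i$ occurring in $\Theta$ is the earliest introduced nominal $j$ on $\Theta$ such that $j$ is a twin of $i$ and $j$ is a quasi-urfather; it may fail to exist, and $\mathrm{dom}(v_\Theta)$ denotes the set of nominals $i$ for which it exists. *)

theory Defs
  imports Main
begin

datatype fm = Pro nat | Nom nat | Neg fm | Con fm fm | Dia fm | At nat fm

abbreviation Box :: "fm \<Rightarrow> fm" where "Box \<phi> \<equiv> Neg (Dia (Neg \<phi>))"

fun noms :: "fm \<Rightarrow> nat set" where
  "noms (Pro p) = {}"
| "noms (Nom i) = {i}"
| "noms (Neg \<phi>) = noms \<phi>"
| "noms (Con \<phi> \<psi>) = noms \<phi> \<union> noms \<psi>"
| "noms (Dia \<phi>) = noms \<phi>"
| "noms (At i \<phi>) = insert i (noms \<phi>)"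

fun subfms :: "fm \<Rightarrow> fm set" where
  "subfms (Pro p) = {Pro p}"
| "subfms (Nom i) = {Nom i}"
| "subfms (Neg \<phi>) = insert (Neg \<phi>) (subfms \<phi>)"
| "subfms (Con \<phi> \<psi>) = insert (Con \<phi> \<psi>) (subfms \<phi> \<union> subfms \<psi>)"
| "subfms (Dia \<phi>) = insert (Dia \<phi>) (subfms \<phi>)"
| "subfms (At i \<phi>) = insert (At i \<phi>) (subfms \<phi>)"

text \<open>A branch is recorded as the list of steps that built it: the first step is
 the root, each further step is one rule application (tagged by the rule) together
 with the list of formulas it added to the branch.\<close>

datatype rtag = RRoot | RNegNeg | RCon | RNegCon | RDia | RNegDia | RBoxSym
  | RAt | RNegAt | RId | RRef | RIrr

type_synonym step = "rtag \<times> fm list"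
type_synonym branch = "step list"

definition fms :: "branch \<Rightarrow> fm set" where
  "fms \<Theta> = (\<Union>s\<in>set \<Theta>. set (snd s))"

text \<open>Formula occurrences that are not accessibility formulas (the accessibility
 formula of a [Dia] step is the first formula it adds).\<close>
definition nonacc_fms :: "branch \<Rightarrow> fm set" where
  "nonacc_fms \<Theta> = {\<phi>. \<exists>s\<in>set \<Theta>. \<exists>k<length (snd s).
      snd s ! k = \<phi> \<and> \<not> (fst s = RDia \<and> k = 0)}"

definition noms_br :: "branch \<Rightarrow> nat set" where
  "noms_br \<Theta> = (\<Union>\<phi>\<in>fms \<Theta>. noms \<phi>)"

definition root_fm :: "branch \<Rightarrow> fm" where
  "root_fm \<Theta> = hd (snd (hd \<Theta>))"

definition dia_used :: "branch \<Rightarrow> fm set" where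
  "dia_used \<Theta> = {At i (Dia \<phi>) | i j \<phi>. (RDia, [At i (Dia (Nom j)), At j \<phi>]) \<in> set \<Theta>}"

definition prec :: "branch \<Rightarrow> (nat \<times> nat) set" where
  "prec \<Theta> = {(i, j) | i j. \<exists>\<phi>. (RDia, [At i (Dia (Nom j)), At j \<phi>]) \<in> set \<Theta>}"

definition quasi_sub :: "fm \<Rightarrow> fm \<Rightarrow> bool" where
  "quasi_sub a b = (case a of At i \<phi> \<Rightarrow> (case b of At j \<psi> \<Rightarrow>
      \<phi> \<in> subfms \<psi> \<or> (\<exists>\<chi>. \<phi> = Neg \<chi> \<and> \<chi> \<in> subfms \<psi>) | _ \<Rightarrow> False) | _ \<Rightarrow> False)"

definition Tset :: "branch \<Rightarrow> nat \<Rightarrow> fm set" where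
  "Tset \<Theta> i = {\<phi>. At i \<phi> \<in> fms \<Theta> \<and> quasi_sub (At i \<phi>) (root_fm \<Theta>)}"

definition twins :: "branch \<Rightarrow> nat \<Rightarrow> nat \<Rightarrow> bool" where
  "twins \<Theta> i j \<longleftrightarrow> i \<in> noms_br \<Theta> \<and> j \<in> noms_br \<Theta> \<and> Tset \<Theta> i = Tset \<Theta> j"

definition quasi_urfather :: "branch \<Rightarrow> nat \<Rightarrow> bool" where
  "quasi_urfather \<Theta> i \<longleftrightarrow> \<not> (\<exists>j k. j \<noteq> k \<and> twins \<Theta> j k \<and>
      (j, i) \<in> (prec \<Theta>)\<^sup>* \<and> (k, i) \<in> (prec \<Theta>)\<^sup>*)"

definition step_ok :: "branch \<Rightarrow> step \<Rightarrow> bool" where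
  "step_ok \<Theta> s \<longleftrightarrow>
    (\<exists>i \<phi>. At i (Neg (Neg \<phi>)) \<in> fms \<Theta> \<and> s = (RNegNeg, [At i \<phi>]))
  \<or> (\<exists>i \<phi> \<psi>. At i (Con \<phi> \<psi>) \<in> fms \<Theta> \<and> s = (RCon, [At i \<phi>, At i \<psi>]))
  \<or> (\<exists>i \<phi> \<psi>. At i (Neg (Con \<phi> \<psi>)) \<in> fms \<Theta> \<and>
       (s = (RNegCon, [At i (Neg \<phi>)]) \<or> s = (RNegCon, [At i (Neg \<psi>)])))
  \<or> (\<exists>i \<phi> j. At i (Dia \<phi>) \<in> nonacc_fms \<Theta> \<and> At i (Dia \<phi>) \<notin> dia_used \<Theta> \<and>
       quasi_urfather \<Theta> i \<and> j \<notin> noms_br \<Theta> \<and>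
       s = (RDia, [At i (Dia (Nom j)), At j \<phi>]))
  \<or> (\<exists>i \<phi> j. At i (Neg (Dia \<phi>)) \<in> fms \<Theta> \<and> At i (Dia (Nom j)) \<in> fms \<Theta> \<and>
       s = (RNegDia, [At j (Neg \<phi>)]))
  \<or> (\<exists>i \<phi> j. At i (Box \<phi>) \<in> fms \<Theta> \<and> At j (Dia (Nom i)) \<in> fms \<Theta> \<and>
       s = (RBoxSym, [At j \<phi>]))
  \<or> (\<exists>i j \<phi>. At i (At j \<phi>) \<in> fms \<Theta> \<and> s = (RAt, [At j \<phi>]))
  \<or> (\<exists>i j \<phi>. At i (Neg (At j \<phi>)) \<in> fms \<Theta> \<and> s = (RNegAt, [At j (Neg \<phi>)]))
  \<or> (\<exists>i j \<phi>. At i \<phi> \<in> nonacc_fms \<Theta> \<and> At i (Nom j) \<in> fms \<Theta> \<and> s = (RId, [At j \<phi>]))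
  \<or> (\<exists>i. i \<in> noms_br \<Theta> \<and> s = (RRef, [At i (Nom i)]))
  \<or> (\<exists>i. i \<in> noms_br \<Theta> \<and> s = (RIrr, [At i (Neg (Dia (Nom i)))]))"

definition closed :: "branch \<Rightarrow> bool" where
  "closed \<Theta> \<longleftrightarrow> (\<exists>i \<phi>. At i \<phi> \<in> fms \<Theta> \<and> At i (Neg \<phi>) \<in> fms \<Theta>)"

definition saturated :: "branch \<Rightarrow> bool" where
  "saturated \<Theta> \<longleftrightarrow> (\<forall>s. step_ok \<Theta> s \<longrightarrow> set (snd s) \<subseteq> fms \<Theta>)"

definition tab_branch :: "branch \<Rightarrow> bool" where
  "tab_branch \<Theta> \<longleftrightarrow>
     (\<exists>k \<psi> rest. \<Theta> = (RRoot, [At k \<psi>]) # rest \<and> k \<notin> noms \<psi>)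
   \<and> (\<forall>n. 0 < n \<and> n < length \<Theta> \<longrightarrow>
        step_ok (take n \<Theta>) (\<Theta> ! n) \<and> \<not> closed (take n \<Theta>) \<and> \<not> saturated (take n \<Theta>))
   \<and> (closed \<Theta> \<or> saturated \<Theta>)"

definition intro_time :: "branch \<Rightarrow> nat \<Rightarrow> nat" where
  "intro_time \<Theta> j = (LEAST n. n < length \<Theta> \<and> j \<in> (\<Union>\<phi>\<in>set (snd (\<Theta> ! n)). noms \<phi>))"

definition urf_cand :: "branch \<Rightarrow> nat \<Rightarrow> nat \<Rightarrow> bool" where
  "urf_cand \<Theta> i j \<longleftrightarrow> j \<in> noms_br \<Theta> \<and> twins \<Theta> i j \<and> quasi_urfather \<Theta> j"

definition id_urfather :: "branch \<Rightarrow> nat \<Rightarrow> nat option" where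
  "id_urfather \<Theta> i = (if i \<in> noms_br \<Theta> \<and> (\<exists>j. urf_cand \<Theta> i j)
      then Some (ARG_MIN (intro_time \<Theta>) j. urf_cand \<Theta> i j) else None)"

definition dom_v :: "branch \<Rightarrow> nat set" where
  "dom_v \<Theta> = {i. id_urfather \<Theta> i \<noteq> None}"

end

theory Submission
  imports Defs
begin

(* A nominal of the root formula occurs on the branch from the very first step, whereas
   [Dia] only ever introduces nominals that do not yet occur on the branch. Hence a root
   nominal has no \<prec>-predecessor, its only \<prec>*-ancestor is itself, and so it is trivially a
   quasi-urfather; being its own twin, it is a candidate for its own identity urfather. *)

lemma in_dom_v_iff: "i \<in> dom_v \<Theta> \<longleftrightarrow> i \<in> noms_br \<Theta> \<and> (\<exists>j. urf_cand \<Theta> i j)"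
  by (simp add: dom_v_def id_urfather_def)

lemma urf_cand_refl:
  assumes "i \<in> noms_br \<Theta>" and "quasi_urfather \<Theta> i"
  shows "urf_cand \<Theta> i i"
  using assms by (simp add: urf_cand_def twins_def)

lemma quasi_urfather_if_no_prec_predecessor:
  assumes "\<And>j. (j, i) \<notin> prec \<Theta>"
  shows "quasi_urfather \<Theta> i"
proof -
  have "j = i" if "(j, i) \<in> (prec \<Theta>)\<^sup>*" for j
    using that assms by (auto elim: rtranclE)
  then show ?thesis
    unfolding quasi_urfather_def by blast
qed

lemma root_fm_in_fms_take:
  assumes "tab_branch \<Theta>" and "0 < n"
  shows "root_fm \<Theta> \<in> fms (take n \<Theta>)"
proof -
  obtain k \<psi> rest where "\<Theta> = (RRoot, [At k \<psi>]) # rest"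
    using assms(1) unfolding tab_branch_def by blast
  with assms(2) show ?thesis
    by (cases n) (auto simp: fms_def root_fm_def)
qed

lemma noms_root_fm_subset_noms_br_take:
  assumes "tab_branch \<Theta>" and "0 < n"
  shows "noms (root_fm \<Theta>) \<subseteq> noms_br (take n \<Theta>)"
  using root_fm_in_fms_take[OF assms] unfolding noms_br_def by blast

lemma noms_root_fm_subset_noms_br:
  assumes "tab_branch \<Theta>"
  shows "noms (root_fm \<Theta>) \<subseteq> noms_br \<Theta>"
proof -
  have "\<Theta> \<noteq> []"
    using assms unfolding tab_branch_def by auto
  then show ?thesis
    using noms_root_fm_subset_noms_br_take[OF assms, of "length \<Theta>"] by simp
qed

lemma prec_target_fresh_at_its_step:
  assumes "tab_branch \<Theta>" and "(i, j) \<in> prec \<Theta>"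
  obtains n where "0 < n" and "j \<notin> noms_br (take n \<Theta>)"
proof -
  obtain \<phi> where "(RDia, [At i (Dia (Nom j)), At j \<phi>]) \<in> set \<Theta>"
    using assms(2) unfolding prec_def by blast
  then obtain n where n: "n < length \<Theta>" "\<Theta> ! n = (RDia, [At i (Dia (Nom j)), At j \<phi>])"
    by (metis in_set_conv_nth)
  have "0 < n"
    using assms(1) n(2) unfolding tab_branch_def by (cases n) auto
  then have "step_ok (take n \<Theta>) (\<Theta> ! n)"
    using assms(1) n(1) unfolding tab_branch_def by blast
  then have "j \<notin> noms_br (take n \<Theta>)"
    using n(2) unfolding step_ok_def by auto
  with \<open>0 < n\<close> show thesis by (rule that)
qed

lemma root_nominal_not_prec_target:
  assumes "tab_branch \<Theta>" and "i \<in> noms (root_fm \<Theta>)"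
  shows "(j, i) \<notin> prec \<Theta>"
  using prec_target_fresh_at_its_step[OF assms(1)] noms_root_fm_subset_noms_br_take[OF assms(1)]
    assms(2) by blast

theorem lemma5:
  assumes "tab_branch \<Theta>"
    and "i \<in> noms (root_fm \<Theta>)"
  shows "i \<in> dom_v \<Theta>"
proof -
  have "i \<in> noms_br \<Theta>"
    using noms_root_fm_subset_noms_br[OF assms(1)] assms(2) by blast
  moreover have "quasi_urfather \<Theta> i"
    using quasi_urfather_if_no_prec_predecessor root_nominal_not_prec_target[OF assms] by blast
  ultimately show ?thesis
    unfolding in_dom_v_iff using urf_cand_refl by blast
qed

end
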